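(* Let $X$ be a compact topological space, let $D\subseteq X$, let $\overline{D}$ be the closure of $D$ in $X$, and put $\partial D:=\overline{D}\setminus D$. Let $\overline{\mathbb{C}}=\mathbb{C}\cup\{\infty\}$ be the Riemann sphere and let $f\colon\overline{D}\to\overline{\mathbb{C}}$ be a continuous map such that $f(D)$ is open in $\overline{\mathbb{C}}$. Let $m:=\inf_{z\in\partial D}|f(z)|\in[0,\infty]$ (with $|\infty|=\infty$) and $B_m:=\{w\in\mathbb{C}\colon |w|<m\}$. Then either $f(D)\supseteq B_m$ (i.e. $f$ takes on $D$ all values of modulus $<m$), or $f(\overline{D})\subseteq\overline{\mathbb{C}}\setminus B_m$ (i.e. all values of $f$ on $\overline{D}$ have modulus $\ge m$).
   Context: Note that $\partial D$ is defined as $\overline{D}\setminus D$; the convention $|\infty|=\infty$ is used. *)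

theory Defs
  imports "HOL-Analysis.Analysis" "HOL-Library.Extended_Real"
begin

text \<open>The Riemann sphere is modelled as \<open>complex option\<close>: \<open>Some z\<close> is the finite
  point z and \<open>None\<close> is the point at infinity.  Its topology is that of the
  one-point compactification of the complex plane.\<close>

definition sphere_open :: "complex option set \<Rightarrow> bool" where
  "sphere_open U \<longleftrightarrow> open {z. Some z \<in> U} \<and>
     (None \<in> U \<longrightarrow> (\<exists>R::real. \<forall>z. R < cmod z \<longrightarrow> Some z \<in> U))"

lemma istopology_sphere_open: "istopology sphere_open"
  unfolding istopology_def
proof (intro conjI allI impI)
  fix S T assume S: "sphere_open S" and T: "sphere_open T"
  have "{z. Some z \<in> S \<inter> T} = {z. Some z \<in> S} \<inter> {z. Some z \<in> T}" by auto
  moreover have "None \<in> S \<inter> T \<Longrightarrow> \<exists>R::real. \<forall>z. R < cmod z \<longrightarrow> Some z \<in> S \<inter> T"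
  proof -
    assume "None \<in> S \<inter> T"
    then obtain R1 R2 where "\<forall>z. R1 < cmod z \<longrightarrow> Some z \<in> S" "\<forall>z. R2 < cmod z \<longrightarrow> Some z \<in> T"
      using S T unfolding sphere_open_def by blast
    then show ?thesis by (intro exI[of _ "max R1 R2"]) auto
  qed
  ultimately show "sphere_open (S \<inter> T)" using S T unfolding sphere_open_def by auto
next
  fix K assume K: "\<forall>S\<in>K. sphere_open S"
  have "{z. Some z \<in> \<Union>K} = (\<Union>S\<in>K. {z. Some z \<in> S})" by auto
  moreover have "None \<in> \<Union>K \<Longrightarrow> \<exists>R::real. \<forall>z. R < cmod z \<longrightarrow> Some z \<in> \<Union>K"
    using K unfolding sphere_open_def by blast
  ultimately show "sphere_open (\<Union>K)" using K unfolding sphere_open_def by auto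
qed

definition riemann_sphere :: "complex option topology" where
  "riemann_sphere = topology sphere_open"

definition sphere_abs :: "complex option \<Rightarrow> ereal" where
  "sphere_abs w = (case w of None \<Rightarrow> \<infinity> | Some z \<Rightarrow> ereal (cmod z))"

end

theory Submission
  imports Defs
begin

text \<open>The finite points \<open>V\<close> of \<open>f(D)\<close> form an open subset of \<open>\<complex>\<close>. Since \<open>X\<close> is
  compact, \<open>f(closure D)\<close> is compact and hence closed in the Hausdorff Riemann sphere, so the
  finite points \<open>K\<close> of \<open>f(closure D)\<close> form a closed set containing \<open>V\<close>. Hence the frontier
  of \<open>V\<close> lies in \<open>K - V\<close>, i.e.\ among the finite values of \<open>f\<close> on \<open>\<partial>D\<close>, which avoid
  \<open>B\<^sub>m\<close> by the choice of \<open>m\<close>. So the connected set \<open>B\<^sub>m\<close> lies either inside \<open>V\<close> or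
  outside \<open>K\<close>.\<close>

lemma openin_riemann_sphere: "openin riemann_sphere = sphere_open"
  by (simp add: riemann_sphere_def istopology_sphere_open)

lemma topspace_riemann_sphere: "topspace riemann_sphere = UNIV"
proof -
  have "sphere_open UNIV" unfolding sphere_open_def by simp
  then show ?thesis unfolding topspace_def openin_riemann_sphere by auto
qed

lemma openin_riemann_sphere_finite_part:
  "openin riemann_sphere U \<Longrightarrow> open {z. Some z \<in> U}"
  by (simp add: openin_riemann_sphere sphere_open_def)

lemma closedin_riemann_sphere_finite_part:
  assumes "closedin riemann_sphere K"
  shows "closed {z. Some z \<in> K}"
proof -
  have "open {z. Some z \<in> UNIV - K}"
    using assms by (intro openin_riemann_sphere_finite_part)
      (simp add: closedin_def topspace_riemann_sphere)
  moreover have "{z. Some z \<in> UNIV - K} = - {z. Some z \<in> K}" by auto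
  ultimately show ?thesis by (simp add: closed_def)
qed

lemma openin_riemann_sphere_Some_image:
  "open S \<Longrightarrow> openin riemann_sphere (Some ` S)"
  by (simp add: openin_riemann_sphere sphere_open_def image_iff)

lemma openin_riemann_sphere_neighbourhood_infinity:
  "openin riemann_sphere (insert None (Some ` {z. R < cmod z}))"
proof -
  have "open {z::complex. R < cmod z}"
    by (simp add: open_Collect_less continuous_on_norm_id continuous_on_const)
  then show ?thesis by (auto simp: openin_riemann_sphere sphere_open_def image_iff)
qed

lemma riemann_sphere_separate_Some_None:
  "\<exists>U V. openin riemann_sphere U \<and> openin riemann_sphere V \<and> Some a \<in> U \<and> None \<in> V \<and> disjnt U V"
proof (intro exI conjI)
  show "openin riemann_sphere (Some ` ball a 1)"
    by (simp add: openin_riemann_sphere_Some_image)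
  show "openin riemann_sphere (insert None (Some ` {z. cmod a + 1 < cmod z}))"
    by (rule openin_riemann_sphere_neighbourhood_infinity)
  have "dist a z < 1 \<Longrightarrow> cmod z \<le> cmod a + 1" for z
    using norm_triangle_ineq2[of z a] by (simp add: dist_norm norm_minus_commute)
  then show "disjnt (Some ` ball a 1) (insert None (Some ` {z. cmod a + 1 < cmod z}))"
    by (force simp: disjnt_def)
qed auto

lemma Hausdorff_space_riemann_sphere: "Hausdorff_space riemann_sphere"
  unfolding Hausdorff_space_def
proof (intro allI impI)
  fix x y :: "complex option"
  assume "x \<in> topspace riemann_sphere \<and> y \<in> topspace riemann_sphere \<and> x \<noteq> y"
  then have "x \<noteq> y" by simp
  show "\<exists>U V. openin riemann_sphere U \<and> openin riemann_sphere V \<and> x \<in> U \<and> y \<in> V \<and> disjnt U V"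
  proof (cases x)
    case None
    with \<open>x \<noteq> y\<close> obtain b where "y = Some b" by (cases y) auto
    moreover obtain U V where "openin riemann_sphere U" "openin riemann_sphere V"
      "Some b \<in> U" "None \<in> V" "disjnt U V"
      using riemann_sphere_separate_Some_None by blast
    ultimately show ?thesis using None disjnt_sym by blast
  next
    case (Some a)
    show ?thesis
    proof (cases y)
      case None
      then show ?thesis using Some riemann_sphere_separate_Some_None by blast
    next
      case (Some b)
      define r where "r = dist a b / 2"
      have "r > 0" using \<open>x \<noteq> y\<close> \<open>x = Some a\<close> Some by (simp add: r_def)
      have "ball a r \<inter> ball b r = {}"
        by (rule disjoint_ballI) (simp add: r_def)
      then have "disjnt (Some ` ball a r) (Some ` ball b r)"
        by (auto simp: disjnt_def)
      with \<open>r > 0\<close> show ?thesis using \<open>x = Some a\<close> Some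
        by (intro exI[of _ "Some ` ball a r"] exI[of _ "Some ` ball b r"] conjI)
          (simp_all add: openin_riemann_sphere_Some_image)
    qed
  qed
qed

lemma closedin_riemann_sphere_image_compactin:
  assumes "compactin X C" and "continuous_map (subtopology X C) riemann_sphere f"
  shows "closedin riemann_sphere (f ` C)"
proof -
  have "topspace (subtopology X C) = C"
    using compactin_subset_topspace[OF assms(1)] by (simp add: inf.absorb2)
  moreover have "compact_space (subtopology X C)"
    using assms(1) by (rule compact_space_subtopology)
  ultimately have "compactin riemann_sphere (f ` C)"
    using image_compactin assms(2) unfolding compact_space_def by metis
  then show ?thesis
    by (rule compactin_imp_closedin[OF Hausdorff_space_riemann_sphere])
qed

lemma connected_norm_less_ereal: "connected {w::'a::real_normed_vector. ereal (norm w) < m}"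
proof (cases m)
  case (real r)
  then have "{w::'a. ereal (norm w) < m} = ball 0 r" by auto
  then show ?thesis by simp
next
  case PInf
  then have "{w::'a. ereal (norm w) < m} = UNIV" by auto
  then show ?thesis by (simp add: connected_UNIV)
next
  case MInf
  then have "{w::'a. ereal (norm w) < m} = {}" by auto
  then show ?thesis by simp
qed

lemma connected_subset_or_disjoint_closed:
  fixes B V K :: "'a::topological_space set"
  assumes "connected B" "open V" "closed K" "V \<subseteq> K" "B \<inter> K \<subseteq> V"
  shows "B \<subseteq> V \<or> B \<inter> K = {}"
proof -
  have "closure V \<subseteq> K" using assms(3,4) by (simp add: closure_minimal)
  then have "frontier V \<subseteq> K - V" using assms(2) by (auto simp: frontier_def interior_open)
  then have "B \<inter> frontier V = {}" using assms(5) by blast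
  then have "B \<inter> V = {} \<or> B - V = {}" using connected_Int_frontier[OF assms(1)] by blast
  then show ?thesis using assms(5) by blast
qed

theorem mainTheorem8:
  fixes X :: "'a topology" and D :: "'a set" and f :: "'a \<Rightarrow> complex option"
  assumes "compact_space X"
    and "D \<subseteq> topspace X"
    and "continuous_map (subtopology X (X closure_of D)) riemann_sphere f"
    and "openin riemann_sphere (f ` D)"
  shows "let m = (INF z \<in> (X closure_of D) - D. sphere_abs (f z));
             Bm = {w::complex. ereal (cmod w) < m}
         in Some ` Bm \<subseteq> f ` D \<or> f ` (X closure_of D) \<subseteq> UNIV - Some ` Bm"
proof -
  define C where "C = X closure_of D"
  define m where "m = (INF z \<in> C - D. sphere_abs (f z))"
  define B where "B = {w::complex. ereal (cmod w) < m}"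
  have "D \<subseteq> C" unfolding C_def using assms(2) by (rule closure_of_subset)
  have "compactin X C"
    unfolding C_def using assms(1) by (simp add: closedin_compact_space)
  then have "closed {z. Some z \<in> f ` C}"
    using assms(3) unfolding C_def
    by (intro closedin_riemann_sphere_finite_part closedin_riemann_sphere_image_compactin)
  moreover have "B \<inter> {z. Some z \<in> f ` C} \<subseteq> {z. Some z \<in> f ` D}"
  proof clarify
    fix z c assume "z \<in> B" "c \<in> C" "Some z = f c"
    have "c \<in> D"
    proof (rule ccontr)
      assume "c \<notin> D"
      then have "m \<le> sphere_abs (f c)" unfolding m_def using \<open>c \<in> C\<close> by (intro INF_lower) simp
      then show False using \<open>z \<in> B\<close> \<open>Some z = f c\<close>[symmetric] by (simp add: B_def sphere_abs_def)
    qed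
    then show "Some z \<in> f ` D" using \<open>Some z = f c\<close> by simp
  qed
  moreover have "open {z. Some z \<in> f ` D}"
    using assms(4) by (rule openin_riemann_sphere_finite_part)
  moreover have "{z. Some z \<in> f ` D} \<subseteq> {z. Some z \<in> f ` C}"
    using \<open>D \<subseteq> C\<close> by blast
  ultimately have "B \<subseteq> {z. Some z \<in> f ` D} \<or> B \<inter> {z. Some z \<in> f ` C} = {}"
    using connected_subset_or_disjoint_closed[of B] connected_norm_less_ereal unfolding B_def by blast
  then show ?thesis unfolding Let_def C_def[symmetric] m_def[symmetric] B_def[symmetric] by blast
qed

end
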